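(* Let $a, b$ be positive integers and let $T_{a,b} = \{C_{i,1} : 1 \le i \le 2a+1\} \cup \{C_{a+1,j} : 2 \le j \le b+1\}$, of size $n = 2a+b+1$. Then on the $n \times n$ board, $2 \le \mathrm{cp}_{\mathrm{free}}(T_{a,b}) \le 4$.
   Context: For integers $i,j$, $C_{i,j}$ denotes the unit square cell in column $i$ and row $j$ of the integer grid (columns numbered left to right, rows numbered top to bottom). A polyomino is a finite set of cells; its size is its number of cells. For a polyomino $\mathcal{P}$ of size $n$ the board is $\mathbb{B} = \{C_{i,j} : 1 \le i,j \le n\}$. The shift of $\mathcal{P}$ by integers $(c,d)$ is $\mathcal{P}+(c,d) = \{C_{x+c,y+d} : C_{x,y} \in \mathcal{P}\}$. The rotations of $T_{a,b}$ by $90^\circ,180^\circ,270^\circ$ clockwise are $TR_{a,b} = \{C_{b+1,i} : 1 \le i \le 2a+1\} \cup \{C_{j,a+1} : 1 \le j \le b\}$, $TR^2_{a,b} = \{C_{i,b+1} : 1 \le i \le 2a+1\} \cup \{C_{a+1,j} : 1 \le j \le b\}$, $TR^3_{a,b} = \{C_{1,i} : 1 \le i \le 2a+1\} \cup \{C_{j,a+1} : 2 \le j \le b+1\}$. A free copy of $T_{a,b}$ is any shift of one of these four. A set of polyominoes is a valid arrangement if each is contained in $\mathbb{B}$ and they are pairwise disjoint. A free packing of $\mathcal{P}$ is a set of free copies of $\mathcal{P}$ forming a valid arrangement such that adding any further free copy of $\mathcal{P}$ yields an invalid arrangement. The clumsy free packing number $\mathrm{cp}_{\mathrm{free}}(\mathcal{P})$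 is the minimum number of polyominoes in a free packing of $\mathcal{P}$ on the $n \times n$ board. *)

theory Defs
  imports Main
begin

text \<open>A cell C_{i,j} is represented by the pair (i, j) :: int \<times> int
  (i = column, j = row). A polyomino is a finite set of cells.\<close>

type_synonym cell = "int \<times> int"

definition shift :: "cell set \<Rightarrow> int \<Rightarrow> int \<Rightarrow> cell set" where
  "shift P c d = {(x + c, y + d) | x y. (x, y) \<in> P}"

definition board :: "nat \<Rightarrow> cell set" where
  "board n = {(i, j). 1 \<le> i \<and> i \<le> int n \<and> 1 \<le> j \<and> j \<le> int n}"

definition T :: "nat \<Rightarrow> nat \<Rightarrow> cell set" where
  "T a b = {(i, 1) | i. 1 \<le> i \<and> i \<le> 2 * int a + 1}
         \<union> {(int a + 1, j) | j. 2 \<le> j \<and> j \<le> int b + 1}"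

definition TR :: "nat \<Rightarrow> nat \<Rightarrow> cell set" where
  "TR a b = {(int b + 1, i) | i. 1 \<le> i \<and> i \<le> 2 * int a + 1}
          \<union> {(j, int a + 1) | j. 1 \<le> j \<and> j \<le> int b}"

definition TR2 :: "nat \<Rightarrow> nat \<Rightarrow> cell set" where
  "TR2 a b = {(i, int b + 1) | i. 1 \<le> i \<and> i \<le> 2 * int a + 1}
           \<union> {(int a + 1, j) | j. 1 \<le> j \<and> j \<le> int b}"

definition TR3 :: "nat \<Rightarrow> nat \<Rightarrow> cell set" where
  "TR3 a b = {(1, i) | i. 1 \<le> i \<and> i \<le> 2 * int a + 1}
           \<union> {(j, int a + 1) | j. 2 \<le> j \<and> j \<le> int b + 1}"

definition free_copy_T :: "nat \<Rightarrow> nat \<Rightarrow> cell set \<Rightarrow> bool" where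
  "free_copy_T a b Q \<longleftrightarrow>
     (\<exists>c d. Q = shift (T a b) c d \<or> Q = shift (TR a b) c d
          \<or> Q = shift (TR2 a b) c d \<or> Q = shift (TR3 a b) c d)"

definition valid_arrangement :: "nat \<Rightarrow> cell set set \<Rightarrow> bool" where
  "valid_arrangement n S \<longleftrightarrow>
     (\<forall>P\<in>S. P \<subseteq> board n) \<and> (\<forall>P\<in>S. \<forall>Q\<in>S. P \<noteq> Q \<longrightarrow> P \<inter> Q = {})"

definition free_packing_T :: "nat \<Rightarrow> nat \<Rightarrow> nat \<Rightarrow> cell set set \<Rightarrow> bool" where
  "free_packing_T a b n S \<longleftrightarrow>
     (\<forall>P\<in>S. free_copy_T a b P) \<and> valid_arrangement n S \<and>
     (\<forall>Q. free_copy_T a b Q \<and> Q \<notin> S \<longrightarrow> \<not> valid_arrangement n (insert Q S))"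

definition cp_free_T :: "nat \<Rightarrow> nat \<Rightarrow> nat" where
  "cp_free_T a b = (LEAST k. \<exists>S. free_packing_T a b (card (T a b)) S \<and> finite S \<and> card S = k)"

end

theory Submission
  imports Defs
begin

text \<open>A quarter turn of the n \<times> n board maps free copies to free copies, permuting the four
  orientations of T, so statements about arbitrary free copies reduce to upright ones; with
  n = 2a + b + 1 these lie at offsets 0 \<le> c \<le> b, 0 \<le> d \<le> 2a. For the lower bound, a single
  copy never blocks the board: an upright copy either misses the bottom row, where an
  upside-down T fits, or lies in the bottom b + 1 rows, leaving room for a sideways T along the
  left or the right edge. For the upper bound, take the T whose bar lies on row m = min a b
  together with its three rotations; these four copies are disjoint, and a case analysis on
  (c, d) shows that every upright copy crosses one of them, hence by rotation invariance every
  copy does.\<close>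

lemma mem_shift: "(x, y) \<in> shift P c d \<longleftrightarrow> (x - c, y - d) \<in> P"
  unfolding shift_def by force

lemma mem_shift_T: "(x, y) \<in> shift (T a b) c d \<longleftrightarrow>
    y = d + 1 \<and> c + 1 \<le> x \<and> x \<le> c + 2 * int a + 1 \<or>
    x = c + int a + 1 \<and> d + 2 \<le> y \<and> y \<le> d + int b + 1"
  unfolding mem_shift T_def by auto

lemma mem_shift_TR: "(x, y) \<in> shift (TR a b) c d \<longleftrightarrow>
    x = c + int b + 1 \<and> d + 1 \<le> y \<and> y \<le> d + 2 * int a + 1 \<or>
    y = d + int a + 1 \<and> c + 1 \<le> x \<and> x \<le> c + int b"
  unfolding mem_shift TR_def by auto

lemma mem_shift_TR2: "(x, y) \<in> shift (TR2 a b) c d \<longleftrightarrow>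
    y = d + int b + 1 \<and> c + 1 \<le> x \<and> x \<le> c + 2 * int a + 1 \<or>
    x = c + int a + 1 \<and> d + 1 \<le> y \<and> y \<le> d + int b"
  unfolding mem_shift TR2_def by auto

lemma mem_shift_TR3: "(x, y) \<in> shift (TR3 a b) c d \<longleftrightarrow>
    x = c + 1 \<and> d + 1 \<le> y \<and> y \<le> d + 2 * int a + 1 \<or>
    y = d + int a + 1 \<and> c + 2 \<le> x \<and> x \<le> c + int b + 1"
  unfolding mem_shift TR3_def by auto

lemma free_copy_T_shifts:
  "free_copy_T a b (shift (T a b) c d)" "free_copy_T a b (shift (TR a b) c d)"
  "free_copy_T a b (shift (TR2 a b) c d)" "free_copy_T a b (shift (TR3 a b) c d)"
  unfolding free_copy_T_def by blast+

lemma subset_board_iff: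
  "A \<subseteq> board n \<longleftrightarrow> (\<forall>x y. (x, y) \<in> A \<longrightarrow> 1 \<le> x \<and> x \<le> int n \<and> 1 \<le> y \<and> y \<le> int n)"
  by (auto simp: board_def)

lemma disjoint_cells_iff: "A \<inter> B = {} \<longleftrightarrow> (\<forall>x y. (x, y) \<in> A \<longrightarrow> (x, y) \<notin> B)"
  by auto

lemmas mem_shift_rotations = mem_shift_T mem_shift_TR mem_shift_TR2 mem_shift_TR3

lemma card_T: "card (T a b) = 2 * a + b + 1"
proof -
  have T_eq: "T a b = (\<lambda>i. (i, 1)) ` {1..2 * int a + 1} \<union> (\<lambda>j. (int a + 1, j)) ` {2..int b + 1}"
    unfolding T_def by auto
  have "card ((\<lambda>i. (i, 1::int)) ` {1..2 * int a + 1}) = 2 * a + 1"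
    by (subst card_image) (auto simp: inj_on_def)
  moreover have "card ((\<lambda>j. (int a + 1, j)) ` {2..int b + 1}) = b"
    by (subst card_image) (auto simp: inj_on_def)
  ultimately show ?thesis
    unfolding T_eq by (subst card_Un_disjoint) auto
qed

definition rot :: "int \<Rightarrow> cell \<Rightarrow> cell" where
  "rot N p = (N + 1 - snd p, fst p)"

lemma mem_rot_image: "(x, y) \<in> rot N ` A \<longleftrightarrow> (y, N + 1 - x) \<in> A"
  by (force simp: rot_def image_iff)

lemma rot_image_subset_board_iff: "rot (int n) ` A \<subseteq> board n \<longleftrightarrow> A \<subseteq> board n"
  by (auto simp: rot_def board_def)

lemma rot_image_Int: "rot N ` (A \<inter> B) = rot N ` A \<inter> rot N ` B"
  by (rule image_Int) (auto simp: inj_on_def rot_def)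

lemma rot_image_shift_T: "rot N ` shift (T a b) c d = shift (TR a b) (N - int b - 1 - d) c"
  by (rule set_eqI, clarify, simp only: mem_rot_image mem_shift_T mem_shift_TR, arith)

lemma rot_image_shift_TR: "rot N ` shift (TR a b) c d = shift (TR2 a b) (N - 2 * int a - 1 - d) c"
  by (rule set_eqI, clarify, simp only: mem_rot_image mem_shift_TR mem_shift_TR2, arith)

lemma rot_image_shift_TR2: "rot N ` shift (TR2 a b) c d = shift (TR3 a b) (N - int b - 1 - d) c"
  by (rule set_eqI, clarify, simp only: mem_rot_image mem_shift_TR2 mem_shift_TR3, arith)

lemma rot_image_shift_TR3: "rot N ` shift (TR3 a b) c d = shift (T a b) (N - 2 * int a - 1 - d) c"
  by (rule set_eqI, clarify, simp only: mem_rot_image mem_shift_TR3 mem_shift_T, arith)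

lemma free_copy_T_rot_image: "free_copy_T a b Q \<Longrightarrow> free_copy_T a b (rot N ` Q)"
  unfolding free_copy_T_def
  using rot_image_shift_T rot_image_shift_TR rot_image_shift_TR2 rot_image_shift_TR3 by metis

lemma free_copy_T_induct [consumes 1, case_names shift rot]:
  assumes "free_copy_T a b Q"
    and shift: "\<And>c d. \<Phi> (shift (T a b) c d)"
    and rot: "\<And>P. \<Phi> P \<Longrightarrow> \<Phi> (rot N ` P)"
  shows "\<Phi> Q"
proof -
  have TR: "\<Phi> (shift (TR a b) c d)" for c d
    using rot[OF shift[of d "N - int b - 1 - c"]] by (simp add: rot_image_shift_T)
  have TR2: "\<Phi> (shift (TR2 a b) c d)" for c d
    using rot[OF TR[of d "N - 2 * int a - 1 - c"]] by (simp add: rot_image_shift_TR)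
  have TR3: "\<Phi> (shift (TR3 a b) c d)" for c d
    using rot[OF TR2[of d "N - int b - 1 - c"]] by (simp add: rot_image_shift_TR2)
  show ?thesis
    using assms(1) shift TR TR2 TR3 unfolding free_copy_T_def by blast
qed

lemma free_copy_T_nonempty: "free_copy_T a b Q \<Longrightarrow> Q \<noteq> {}"
proof (induction Q rule: free_copy_T_induct[where N = 0])
  case (shift c d)
  have "(c + 1, d + 1) \<in> shift (T a b) c d"
    by (simp add: mem_shift_T)
  then show ?case by blast
qed simp

lemma valid_arrangement_pairwise_disjnt:
  "valid_arrangement n S \<longleftrightarrow> (\<forall>P\<in>S. P \<subseteq> board n) \<and> pairwise disjnt S"
  unfolding valid_arrangement_def pairwise_def disjnt_def by blast

lemma valid_arrangement_insert:
  "valid_arrangement n (insert Q S) \<longleftrightarrow>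
     Q \<subseteq> board n \<and> valid_arrangement n S \<and> (\<forall>P\<in>S. P \<noteq> Q \<longrightarrow> P \<inter> Q = {})"
  unfolding valid_arrangement_pairwise_disjnt pairwise_insert
  by (auto simp: disjnt_def Int_commute)

lemma free_packing_T_iff:
  "free_packing_T a b n S \<longleftrightarrow>
     (\<forall>P\<in>S. free_copy_T a b P) \<and> valid_arrangement n S \<and>
     (\<forall>Q. free_copy_T a b Q \<and> Q \<subseteq> board n \<longrightarrow> (\<exists>P\<in>S. P \<inter> Q \<noteq> {}))"
proof -
  have "(free_copy_T a b Q \<and> Q \<notin> S \<longrightarrow> \<not> valid_arrangement n (insert Q S)) \<longleftrightarrow>
      (free_copy_T a b Q \<and> Q \<subseteq> board n \<longrightarrow> (\<exists>P\<in>S. P \<inter> Q \<noteq> {}))"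
    if "valid_arrangement n S" for Q
  proof (cases "Q \<in> S")
    case True
    then show ?thesis
      using free_copy_T_nonempty[of a b Q] by (metis Int_absorb)
  next
    case False
    then show ?thesis
      using that unfolding valid_arrangement_insert by auto
  qed
  then show ?thesis
    unfolding free_packing_T_def by blast
qed

lemma cp_free_T_le:
  "free_packing_T a b (card (T a b)) S \<Longrightarrow> finite S \<Longrightarrow> cp_free_T a b \<le> card S"
  unfolding cp_free_T_def by (rule Least_le) blast

lemma le_cp_free_T:
  assumes "free_packing_T a b (card (T a b)) S" "finite S"
    and "\<And>S. free_packing_T a b (card (T a b)) S \<Longrightarrow> finite S \<Longrightarrow> k \<le> card S"
  shows "k \<le> cp_free_T a b"
  unfolding cp_free_T_def by (rule LeastI2_ex) (use assms in blast)+

lemma shift_T_subset_board_bounds: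
  assumes "0 < b" "shift (T a b) c d \<subseteq> board (2 * a + b + 1)"
  shows "0 \<le> c \<and> c \<le> int b \<and> 0 \<le> d \<and> d \<le> 2 * int a"
proof -
  have "(c + 1, d + 1) \<in> shift (T a b) c d" "(c + 2 * int a + 1, d + 1) \<in> shift (T a b) c d"
       "(c + int a + 1, d + int b + 1) \<in> shift (T a b) c d"
    using assms(1) by (simp_all add: mem_shift_T)
  with assms(2) show ?thesis by (auto simp: board_def)
qed

lemma exists_free_copy_disjoint_from_shift_T:
  assumes "0 < a" "0 < b" "0 \<le> c" "c \<le> int b" "0 \<le> d" "d \<le> 2 * int a"
  shows "\<exists>Q. free_copy_T a b Q \<and> Q \<subseteq> board (2 * a + b + 1) \<and> shift (T a b) c d \<inter> Q = {}"
proof -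
  consider (upper) "d < 2 * int a" | (bottom) "d = 2 * int a" "c \<noteq> 0" | (corner) "d = 2 * int a" "c = 0"
    using assms by linarith
  then show ?thesis
  proof cases
    case upper
    define c' where "c' = (if c = 0 then int b else 0)"
    have "shift (TR2 a b) c' (2 * int a) \<subseteq> board (2 * a + b + 1)"
      unfolding subset_board_iff mem_shift_TR2 c'_def using assms by auto
    moreover have "shift (T a b) c d \<inter> shift (TR2 a b) c' (2 * int a) = {}"
      unfolding disjoint_cells_iff mem_shift_TR2 mem_shift_T c'_def using upper assms by auto
    ultimately show ?thesis
      using free_copy_T_shifts by blast
  next
    case bottom
    have "shift (TR3 a b) 0 0 \<subseteq> board (2 * a + b + 1)"
      unfolding subset_board_iff mem_shift_TR3 using assms by auto
    moreover have "shift (T a b) c d \<inter> shift (TR3 a b) 0 0 = {}"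
      unfolding disjoint_cells_iff mem_shift_TR3 mem_shift_T using bottom assms by auto
    ultimately show ?thesis
      using free_copy_T_shifts by blast
  next
    case corner
    have "shift (TR a b) (2 * int a) 0 \<subseteq> board (2 * a + b + 1)"
      unfolding subset_board_iff mem_shift_TR using assms by auto
    moreover have "shift (T a b) c d \<inter> shift (TR a b) (2 * int a) 0 = {}"
      unfolding disjoint_cells_iff mem_shift_TR mem_shift_T using corner assms by auto
    ultimately show ?thesis
      using free_copy_T_shifts by blast
  qed
qed

lemma exists_free_copy_disjoint:
  assumes "0 < a" "0 < b" "free_copy_T a b P" "P \<subseteq> board (2 * a + b + 1)"
  shows "\<exists>Q. free_copy_T a b Q \<and> Q \<subseteq> board (2 * a + b + 1) \<and> P \<inter> Q = {}"
  using assms(3,4)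
proof (induction P rule: free_copy_T_induct[where N = "int (2 * a + b + 1)"])
  case (shift c d)
  with assms(2) have "0 \<le> c \<and> c \<le> int b \<and> 0 \<le> d \<and> d \<le> 2 * int a"
    by (rule shift_T_subset_board_bounds)
  then show ?case
    using exists_free_copy_disjoint_from_shift_T[OF assms(1,2)] by blast
next
  case (rot P)
  from rot.prems have "P \<subseteq> board (2 * a + b + 1)"
    by (rule rot_image_subset_board_iff[THEN iffD1])
  with rot.IH obtain Q where "free_copy_T a b Q" "Q \<subseteq> board (2 * a + b + 1)" "P \<inter> Q = {}"
    by blast
  then have "free_copy_T a b (rot (int (2 * a + b + 1)) ` Q)"
    "rot (int (2 * a + b + 1)) ` Q \<subseteq> board (2 * a + b + 1)"
    "rot (int (2 * a + b + 1)) ` P \<inter> rot (int (2 * a + b + 1)) ` Q = {}"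
    by (simp_all only: free_copy_T_rot_image rot_image_subset_board_iff flip: rot_image_Int)
      simp
  then show ?case by blast
qed

lemma free_packing_T_card_ge_2:
  assumes "0 < a" "0 < b" "free_packing_T a b (2 * a + b + 1) S" "finite S"
  shows "2 \<le> card S"
proof (rule ccontr)
  assume "\<not> 2 \<le> card S"
  then have "card S = 0 \<or> card S = 1" by linarith
  have "\<exists>P. S \<subseteq> {P} \<and> free_copy_T a b P \<and> P \<subseteq> board (2 * a + b + 1)"
  proof (cases "S = {}")
    case True
    have "shift (T a b) 0 0 \<subseteq> board (2 * a + b + 1)"
      by (auto simp: subset_board_iff mem_shift_T)
    with True show ?thesis
      using free_copy_T_shifts(1) by blast
  next
    case False
    with \<open>card S = 0 \<or> card S = 1\<close> \<open>finite S\<close> obtain P where "S = {P}"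
      by (auto simp: card_1_singleton_iff)
    with assms(3) show ?thesis
      unfolding free_packing_T_iff valid_arrangement_def by auto
  qed
  then obtain P where "S \<subseteq> {P}" "free_copy_T a b P" "P \<subseteq> board (2 * a + b + 1)"
    by blast
  with assms(1,2) obtain Q where Q: "free_copy_T a b Q" "Q \<subseteq> board (2 * a + b + 1)" "P \<inter> Q = {}"
    using exists_free_copy_disjoint by blast
  from assms(3) have "\<exists>P'\<in>S. P' \<inter> Q \<noteq> {}"
    using Q(1,2) unfolding free_packing_T_iff by blast
  with \<open>S \<subseteq> {P}\<close> Q(3) show False by blast
qed

definition pinwheel :: "nat \<Rightarrow> nat \<Rightarrow> int \<Rightarrow> cell set set" where
  "pinwheel a b m =
     {shift (T a b) 0 (m - 1), shift (TR a b) (2 * int a + 1 - m) 0,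
      shift (TR2 a b) (int b) (2 * int a + 1 - m), shift (TR3 a b) (m - 1) (int b)}"

lemma rot_image_pinwheel: "(`) (rot (int (2 * a + b + 1))) ` pinwheel a b m = pinwheel a b m"
  by (simp add: pinwheel_def rot_image_shift_T rot_image_shift_TR rot_image_shift_TR2
      rot_image_shift_TR3 insert_commute algebra_simps)

lemma free_copy_T_pinwheel: "P \<in> pinwheel a b m \<Longrightarrow> free_copy_T a b P"
  by (auto simp: pinwheel_def free_copy_T_shifts)

lemma pinwheel_subset_board:
  assumes "1 \<le> m" "m \<le> int a" "P \<in> pinwheel a b m"
  shows "P \<subseteq> board (2 * a + b + 1)"
  using assms unfolding pinwheel_def subset_board_iff by (auto simp: mem_shift_rotations)

lemma pinwheel_disjoint:
  assumes "1 \<le> m" "m \<le> int a" "m \<le> int b"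
  shows "shift (T a b) 0 (m - 1) \<inter> shift (TR a b) (2 * int a + 1 - m) 0 = {}"
    and "shift (T a b) 0 (m - 1) \<inter> shift (TR2 a b) (int b) (2 * int a + 1 - m) = {}"
    and "shift (T a b) 0 (m - 1) \<inter> shift (TR3 a b) (m - 1) (int b) = {}"
    and "shift (TR a b) (2 * int a + 1 - m) 0 \<inter> shift (TR2 a b) (int b) (2 * int a + 1 - m) = {}"
    and "shift (TR a b) (2 * int a + 1 - m) 0 \<inter> shift (TR3 a b) (m - 1) (int b) = {}"
    and "shift (TR2 a b) (int b) (2 * int a + 1 - m) \<inter> shift (TR3 a b) (m - 1) (int b) = {}"
  unfolding disjoint_cells_iff mem_shift_rotations using assms by auto

lemma valid_arrangement_pinwheel:
  assumes "1 \<le> m" "m \<le> int a" "m \<le> int b"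
  shows "valid_arrangement (2 * a + b + 1) (pinwheel a b m)"
  unfolding valid_arrangement_pairwise_disjnt
proof
  show "\<forall>P\<in>pinwheel a b m. P \<subseteq> board (2 * a + b + 1)"
    using assms pinwheel_subset_board by blast
  show "pairwise disjnt (pinwheel a b m)"
    using pinwheel_disjoint[OF assms]
    unfolding pinwheel_def pairwise_insert disjnt_def by (auto simp: Int_commute)
qed

lemma card_pinwheel:
  assumes "1 \<le> m" "m \<le> int a" "m \<le> int b"
  shows "card (pinwheel a b m) = 4"
proof -
  have "shift (T a b) 0 (m - 1) \<noteq> {}" "shift (TR a b) (2 * int a + 1 - m) 0 \<noteq> {}"
    "shift (TR2 a b) (int b) (2 * int a + 1 - m) \<noteq> {}" "shift (TR3 a b) (m - 1) (int b) \<noteq> {}"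
    using free_copy_T_nonempty free_copy_T_shifts by blast+
  with pinwheel_disjoint[OF assms] show ?thesis
    unfolding pinwheel_def by (auto simp: card_insert_if)
qed

lemma shift_T_meets_pinwheel:
  assumes "0 < a" "0 < b" "0 \<le> c" "c \<le> int b" "0 \<le> d" "d \<le> 2 * int a"
  defines "m \<equiv> int (min a b)"
  shows "shift (T a b) c d \<inter> \<Union>(pinwheel a b m) \<noteq> {}"
proof -
  have meets: "shift (T a b) c d \<inter> \<Union>(pinwheel a b m) \<noteq> {}"
    if "(x, y) \<in> shift (T a b) c d" "(x, y) \<in> P" "P \<in> pinwheel a b m" for x y P
    using that by blast
  \<comment> \<open>The bar of the copy reaches the vertical bar of the right or of the left piece, or lies
    on the bar row of the top piece; otherwise its stem crosses the bar of the top piece or the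
    arm of the right or of the left piece.\<close>
  have "c \<ge> int b + 1 - m \<or> (c \<le> m - 1 \<and> d \<ge> int b) \<or> (d = m - 1 \<and> c \<le> 2 * int a)
     \<or> (d \<le> m - 2 \<and> c \<le> int a)
     \<or> (int a - m + 1 \<le> c \<and> c \<le> int a - m + int b \<and> int a - int b \<le> d \<and> d \<le> int a - 1)
     \<or> (m - int a \<le> c \<and> c \<le> m + int b - int a - 1 \<and> int a \<le> d \<and> d \<le> int a + int b - 1)"
    using assms by linarith
  then show ?thesis
  proof (elim disjE)
    assume "c \<ge> int b + 1 - m"
    then show ?thesis
      by (intro meets[of "2 * int a + int b + 2 - m" "d + 1" "shift (TR a b) (2 * int a + 1 - m) 0"])
        (use assms in \<open>auto simp: pinwheel_def mem_shift_rotations\<close>)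
  next
    assume "c \<le> m - 1 \<and> d \<ge> int b"
    then show ?thesis
      by (intro meets[of m "d + 1" "shift (TR3 a b) (m - 1) (int b)"])
        (use assms in \<open>auto simp: pinwheel_def mem_shift_rotations\<close>)
  next
    assume "d = m - 1 \<and> c \<le> 2 * int a"
    then show ?thesis
      by (intro meets[of "c + 1" m "shift (T a b) 0 (m - 1)"])
        (use assms in \<open>auto simp: pinwheel_def mem_shift_rotations\<close>)
  next
    assume "d \<le> m - 2 \<and> c \<le> int a"
    then show ?thesis
      by (intro meets[of "c + int a + 1" m "shift (T a b) 0 (m - 1)"])
        (use assms in \<open>auto simp: pinwheel_def mem_shift_rotations\<close>)
  next
    assume "int a - m + 1 \<le> c \<and> c \<le> int a - m + int b \<and> int a - int b \<le> d \<and> d \<le> int a - 1"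
    then show ?thesis
      by (intro meets[of "c + int a + 1" "int a + 1" "shift (TR a b) (2 * int a + 1 - m) 0"])
        (use assms in \<open>auto simp: pinwheel_def mem_shift_rotations\<close>)
  next
    assume "m - int a \<le> c \<and> c \<le> m + int b - int a - 1 \<and> int a \<le> d \<and> d \<le> int a + int b - 1"
    then show ?thesis
      by (intro meets[of "c + int a + 1" "int a + int b + 1" "shift (TR3 a b) (m - 1) (int b)"])
        (use assms in \<open>auto simp: pinwheel_def mem_shift_rotations\<close>)
  qed
qed

lemma free_copy_T_meets_pinwheel:
  assumes "0 < a" "0 < b" "free_copy_T a b Q" "Q \<subseteq> board (2 * a + b + 1)"
  shows "Q \<inter> \<Union>(pinwheel a b (int (min a b))) \<noteq> {}"
  using assms(3,4)
proof (induction Q rule: free_copy_T_induct[where N = "int (2 * a + b + 1)"])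
  case (shift c d)
  with assms(2) have "0 \<le> c \<and> c \<le> int b \<and> 0 \<le> d \<and> d \<le> 2 * int a"
    by (rule shift_T_subset_board_bounds)
  then show ?case
    using shift_T_meets_pinwheel[OF assms(1,2)] by blast
next
  case (rot P)
  let ?rot = "rot (int (2 * a + b + 1))" and ?U = "\<Union>(pinwheel a b (int (min a b)))"
  from rot.prems have "P \<subseteq> board (2 * a + b + 1)"
    by (rule rot_image_subset_board_iff[THEN iffD1])
  then have "P \<inter> ?U \<noteq> {}"
    by (rule rot.IH)
  moreover have "?rot ` ?U = ?U"
    using rot_image_pinwheel by (metis image_Union)
  ultimately show ?case
    by (metis image_is_empty rot_image_Int)
qed

lemma free_packing_T_pinwheel:
  assumes "0 < a" "0 < b"
  shows "free_packing_T a b (2 * a + b + 1) (pinwheel a b (int (min a b)))"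
  unfolding free_packing_T_iff
proof (intro conjI allI impI)
  show "\<forall>P\<in>pinwheel a b (int (min a b)). free_copy_T a b P"
    using free_copy_T_pinwheel by blast
  show "valid_arrangement (2 * a + b + 1) (pinwheel a b (int (min a b)))"
    using assms by (intro valid_arrangement_pinwheel) auto
  fix Q assume "free_copy_T a b Q \<and> Q \<subseteq> board (2 * a + b + 1)"
  then have "Q \<inter> \<Union>(pinwheel a b (int (min a b))) \<noteq> {}"
    using free_copy_T_meets_pinwheel[OF assms] by blast
  then show "\<exists>P\<in>pinwheel a b (int (min a b)). P \<inter> Q \<noteq> {}"
    by blast
qed

theorem theorem9:
  fixes a b :: nat
  assumes "0 < a" and "0 < b"
  shows "card (T a b) = 2 * a + b + 1 \<and> 2 \<le> cp_free_T a b \<and> cp_free_T a b \<le> 4"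
proof (intro conjI)
  show card: "card (T a b) = 2 * a + b + 1"
    by (rule card_T)
  let ?S = "pinwheel a b (int (min a b))"
  have packing: "free_packing_T a b (card (T a b)) ?S" "finite ?S"
    using free_packing_T_pinwheel[OF assms] by (simp_all add: card pinwheel_def)
  have "card ?S = 4"
    using assms by (intro card_pinwheel) auto
  with cp_free_T_le[OF packing] show "cp_free_T a b \<le> 4"
    by simp
  show "2 \<le> cp_free_T a b"
  proof (rule le_cp_free_T[OF packing])
    fix S assume "free_packing_T a b (card (T a b)) S" "finite S"
    with assms show "2 \<le> card S"
      unfolding card by (rule free_packing_T_card_ge_2)
  qed
qed

end
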